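(* Let $p_1$ and $p_2$ be probability densities on $\mathbb{R}^n$ and $\omega\in[0,1]$. Define the unnormalized harmonic mean $\mathcal{M}^h_\omega\{p_1,p_2\}(\mathbf{x})=\frac{p_1(\mathbf{x})p_2(\mathbf{x})}{(1-\omega)p_1(\mathbf{x})+\omega p_2(\mathbf{x})}$, its normalization constant $\zeta^h=\int_{\mathbb{R}^n}\mathcal{M}^h_\omega\{p_1,p_2\}(\mathbf{x})\,d\mathbf{x}$ (assumed positive), and the harmonic mean density $\mathbf{M}^h_\omega\{p_1,p_2\}=\mathcal{M}^h_\omega\{p_1,p_2\}/\zeta^h$. Then for every $\mathbf{x}\in\mathbb{R}^n$, \[ \min\{p_1(\mathbf{x}),p_2(\mathbf{x})\}\le \mathbf{M}^h_\omega\{p_1,p_2\}(\mathbf{x}), \] i.e. the harmonic mean density is bounded from below by the pointwise minimum of the component densities.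
   Context: The quotient defining $\mathcal{M}^h_\omega$ is taken to be $0$ at points where its numerator vanishes. *)

theory Defs
  imports "HOL-Analysis.Analysis"
begin

definition prob_density :: "('a::euclidean_space \<Rightarrow> real) \<Rightarrow> bool" where
  "prob_density p \<longleftrightarrow> p \<in> borel_measurable lborel \<and> (\<forall>x. 0 \<le> p x)
     \<and> integrable lborel p \<and> integral\<^sup>L lborel p = 1"

definition harm_mean_unnorm ::
  "real \<Rightarrow> ('a \<Rightarrow> real) \<Rightarrow> ('a \<Rightarrow> real) \<Rightarrow> 'a \<Rightarrow> real" where
  "harm_mean_unnorm \<omega> p1 p2 x =
     (if p1 x * p2 x = 0 then 0 else p1 x * p2 x / ((1 - \<omega>) * p1 x + \<omega> * p2 x))"

definition harm_norm_const ::
  "real \<Rightarrow> ('a::euclidean_space \<Rightarrow> real) \<Rightarrow> ('a \<Rightarrow> real) \<Rightarrow> real" where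
  "harm_norm_const \<omega> p1 p2 = integral\<^sup>L lborel (harm_mean_unnorm \<omega> p1 p2)"

definition harm_mean_density ::
  "real \<Rightarrow> ('a::euclidean_space \<Rightarrow> real) \<Rightarrow> ('a \<Rightarrow> real) \<Rightarrow> 'a \<Rightarrow> real" where
  "harm_mean_density \<omega> p1 p2 x = harm_mean_unnorm \<omega> p1 p2 x / harm_norm_const \<omega> p1 p2"

end

theory Submission
  imports Defs
begin

text \<open>Pointwise, the weighted harmonic mean of \<open>p1 x\<close> and \<open>p2 x\<close> lies between
  \<open>min (p1 x) (p2 x)\<close> and the arithmetic mean with swapped weights
  \<open>(1 - \<omega>) * p2 x + \<omega> * p1 x\<close>. Integrating the upper bound gives \<open>\<zeta>\<^sup>h \<le> 1\<close>, so
  normalizing by \<open>\<zeta>\<^sup>h\<close> can only increase the lower bound.\<close>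

lemma weighted_mean_pos:
  fixes a b w :: real
  assumes "0 < a" "0 < b" "0 \<le> w" "w \<le> 1"
  shows "0 < (1 - w) * a + w * b"
proof (cases "w = 0")
  case False
  then have "0 < w * b" using assms by simp
  moreover have "0 \<le> (1 - w) * a" using assms by simp
  ultimately show ?thesis by linarith
qed (use assms in simp)

lemma min_le_harm_mean_unnorm:
  assumes "0 \<le> p1 x" "0 \<le> p2 x" "0 \<le> \<omega>" "\<omega> \<le> 1"
  shows "min (p1 x) (p2 x) \<le> harm_mean_unnorm \<omega> p1 p2 x"
proof (cases "p1 x * p2 x = 0")
  case True
  then show ?thesis using assms by (auto simp: harm_mean_unnorm_def)
next
  case False
  let ?a = "p1 x" and ?b = "p2 x"
  have pos: "0 < ?a" "0 < ?b" using False assms by auto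
  have "(1 - \<omega>) * ?a + \<omega> * ?b \<le> max ?a ?b"
    using assms by (cases "?a \<le> ?b") (auto intro: convex_bound_le)
  then have "min ?a ?b * ((1 - \<omega>) * ?a + \<omega> * ?b) \<le> min ?a ?b * max ?a ?b"
    using pos by (intro mult_left_mono) auto
  also have "\<dots> = ?a * ?b" by (simp add: min_def max_def)
  finally show ?thesis
    using False weighted_mean_pos[OF pos assms(3,4)]
    by (simp add: harm_mean_unnorm_def pos_le_divide_eq)
qed

lemma harm_mean_unnorm_le_arith_mean:
  assumes "0 \<le> p1 x" "0 \<le> p2 x" "0 \<le> \<omega>" "\<omega> \<le> 1"
  shows "harm_mean_unnorm \<omega> p1 p2 x \<le> (1 - \<omega>) * p2 x + \<omega> * p1 x"
proof (cases "p1 x * p2 x = 0")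
  case True
  then show ?thesis using assms by (auto simp: harm_mean_unnorm_def)
next
  case False
  let ?a = "p1 x" and ?b = "p2 x"
  have pos: "0 < ?a" "0 < ?b" using False assms by auto
  \<comment> \<open>the difference of the two sides is \<open>\<omega> (1 - \<omega>) (a - b)\<^sup>2\<close>\<close>
  have "0 \<le> \<omega> * (1 - \<omega>) * (?a - ?b)\<^sup>2" using assms by simp
  then have "?a * ?b \<le> ((1 - \<omega>) * ?b + \<omega> * ?a) * ((1 - \<omega>) * ?a + \<omega> * ?b)"
    by (simp add: algebra_simps power2_eq_square)
  then show ?thesis
    using False weighted_mean_pos[OF pos assms(3,4)]
    by (simp add: harm_mean_unnorm_def pos_divide_le_eq)
qed

lemma harm_norm_const_le_1:
  assumes "prob_density p1" "prob_density p2" "0 \<le> \<omega>" "\<omega> \<le> 1"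
  shows "harm_norm_const \<omega> p1 p2 \<le> 1"
proof (cases "integrable lborel (harm_mean_unnorm \<omega> p1 p2)")
  case True
  have p1: "integrable lborel p1" "integral\<^sup>L lborel p1 = 1" "\<And>x. 0 \<le> p1 x"
    using assms(1) by (auto simp: prob_density_def)
  have p2: "integrable lborel p2" "integral\<^sup>L lborel p2 = 1" "\<And>x. 0 \<le> p2 x"
    using assms(2) by (auto simp: prob_density_def)
  have "harm_norm_const \<omega> p1 p2 \<le> integral\<^sup>L lborel (\<lambda>x. (1 - \<omega>) * p2 x + \<omega> * p1 x)"
    unfolding harm_norm_const_def
    using True p1 p2 assms(3,4) by (intro integral_mono harm_mean_unnorm_le_arith_mean) auto
  also have "\<dots> = 1" using p1 p2 by simp
  finally show ?thesis .
next
  case False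
  then show ?thesis by (simp add: harm_norm_const_def not_integrable_integral_eq)
qed

theorem theorem3:
  fixes p1 p2 :: "real ^ 'n \<Rightarrow> real" and \<omega> :: real
  assumes "prob_density p1" and "prob_density p2"
    and "0 \<le> \<omega>" and "\<omega> \<le> 1"
    and "harm_norm_const \<omega> p1 p2 > 0"
  shows "\<forall>x. min (p1 x) (p2 x) \<le> harm_mean_density \<omega> p1 p2 x"
proof
  fix x
  have nonneg: "0 \<le> p1 x" "0 \<le> p2 x"
    using assms(1,2) by (auto simp: prob_density_def)
  have lower: "min (p1 x) (p2 x) \<le> harm_mean_unnorm \<omega> p1 p2 x"
    using nonneg assms(3,4) by (rule min_le_harm_mean_unnorm)
  with nonneg have "0 \<le> harm_mean_unnorm \<omega> p1 p2 x" by linarith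
  then have "harm_mean_unnorm \<omega> p1 p2 x \<le> harm_mean_density \<omega> p1 p2 x"
    using assms(5) harm_norm_const_le_1[OF assms(1-4)]
    by (simp add: harm_mean_density_def le_divide_eq mult_left_le)
  with lower show "min (p1 x) (p2 x) \<le> harm_mean_density \<omega> p1 p2 x" by linarith
qed

end
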